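(* Let $K\ge 2$, let $\mathcal V=\{\mathbf v\in\{0,1\}^K:\sum_i \mathbf v_i=1\}$ be the set of one-hot vectors, let $\boldsymbol\pi$ be a probability vector on $K$ categories, and let $(\alpha_t)_{t\in[0,1]}$ be a noise schedule with values in $[0,1]$, monotonically decreasing in $t$, with $\alpha_1=0$ and $\alpha_t>0$ for $t<1$. Fix $\mathbf x\in\mathcal V$ and define the forward marginals $q_t(\cdot\mid \mathbf x)=\mathrm{Cat}(\cdot;\alpha_t\mathbf x+(1-\alpha_t)\boldsymbol\pi)$. For $0\le s<t\le 1$ let $q_{s|t}(\cdot\mid \mathbf z_t,\mathbf x)$ denote the true reverse posterior of the Markovian forward process, i.e. $q_{s|t}(\mathbf z_s\mid\mathbf z_t,\mathbf x)=q_{t|s}(\mathbf z_t\mid\mathbf z_s)\,q_s(\mathbf z_s\mid\mathbf x)/q_t(\mathbf z_t\mid\mathbf x)$ with forward transition $q_{t|s}(\cdot\mid\mathbf z_s)=\mathrm{Cat}(\cdot;\tfrac{\alpha_t}{\alpha_s}\mathbf z_s+(1-\tfrac{\alpha_t}{\alpha_s})\boldsymbol\pi)$. Let $T\ge1$, $t(i)=i/T$ for $0\le i\le T$, and let $(\kappa_t)$ be numbers in $[0,1]$. Define the $\Psi$-posteriors $$\Psi_{s|t}(\cdot\mid\mathbf x,\mathbf z_t)=\kappa_t\,q_{s|t}(\cdot\mid\mathbf z_t,\mathbf x)+(1-\kappa_t)\,q_s(\cdot\mid\mathbf x)$$ for $(s,t)=(t(i-1),t(i))$, $\Psi_1(\cdot\mid\mathbf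 x)=\mathrm{Cat}(\cdot;\boldsymbol\pi)$, and define the marginals recursively by $\Psi_{t(i-1)}(\mathbf z_s\mid\mathbf x)=\sum_{\tilde{\mathbf z}_t\in\mathcal V}\Psi_{t(i)}(\tilde{\mathbf z}_t\mid\mathbf x)\,\Psi_{t(i-1)|t(i)}(\mathbf z_s\mid\tilde{\mathbf z}_t,\mathbf x)$. Then for every $0\le i\le T$, $\Psi_{t(i)}(\cdot\mid\mathbf x)=q_{t(i)}(\cdot\mid\mathbf x)$.
   Context: $\mathrm{Cat}(\cdot;\mathbf v)$ is the categorical distribution on $\mathcal V$ assigning probability $\mathbf v_i$ to the $i$-th one-hot vector. The construction is applied independently to each token of a sequence; the statement concerns a single token. *)

theory Defs
  imports Complex_Main
begin

text \<open>Vectors in R^K are modelled as functions nat => real, with components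
  indexed by 0..<K (components at indices >= K are required to vanish for
  one-hot vectors).\<close>

definition onehot :: "nat \<Rightarrow> (nat \<Rightarrow> real) set" where
  "onehot K = {v. (\<forall>i. v i \<in> {0, 1}) \<and> (\<forall>i\<ge>K. v i = 0) \<and> (\<Sum>i<K. v i) = 1}"

text \<open>Cat(z; p): probability that the categorical distribution with
  parameter vector p assigns to the one-hot vector z, i.e. p_i where z = e_i.\<close>
definition Cat :: "nat \<Rightarrow> (nat \<Rightarrow> real) \<Rightarrow> (nat \<Rightarrow> real) \<Rightarrow> real" where
  "Cat K z p = (\<Sum>i<K. z i * p i)"

definition qmarg :: "nat \<Rightarrow> (nat \<Rightarrow> real) \<Rightarrow> (real \<Rightarrow> real) \<Rightarrow> real
    \<Rightarrow> (nat \<Rightarrow> real) \<Rightarrow> (nat \<Rightarrow> real) \<Rightarrow> real" where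
  "qmarg K \<pi> \<alpha> t x z = Cat K z (\<lambda>i. \<alpha> t * x i + (1 - \<alpha> t) * \<pi> i)"

definition qtrans :: "nat \<Rightarrow> (nat \<Rightarrow> real) \<Rightarrow> (real \<Rightarrow> real) \<Rightarrow> real \<Rightarrow> real
    \<Rightarrow> (nat \<Rightarrow> real) \<Rightarrow> (nat \<Rightarrow> real) \<Rightarrow> real" where
  "qtrans K \<pi> \<alpha> s t zs zt =
     Cat K zt (\<lambda>i. (\<alpha> t / \<alpha> s) * zs i + (1 - \<alpha> t / \<alpha> s) * \<pi> i)"

definition qpost :: "nat \<Rightarrow> (nat \<Rightarrow> real) \<Rightarrow> (real \<Rightarrow> real) \<Rightarrow> real \<Rightarrow> real
    \<Rightarrow> (nat \<Rightarrow> real) \<Rightarrow> (nat \<Rightarrow> real) \<Rightarrow> (nat \<Rightarrow> real) \<Rightarrow> real" where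
  "qpost K \<pi> \<alpha> s t zs zt x =
     qtrans K \<pi> \<alpha> s t zs zt * qmarg K \<pi> \<alpha> s x zs / qmarg K \<pi> \<alpha> t x zt"

definition PsiPost :: "nat \<Rightarrow> (nat \<Rightarrow> real) \<Rightarrow> (real \<Rightarrow> real) \<Rightarrow> (real \<Rightarrow> real)
    \<Rightarrow> real \<Rightarrow> real \<Rightarrow> (nat \<Rightarrow> real) \<Rightarrow> (nat \<Rightarrow> real) \<Rightarrow> (nat \<Rightarrow> real) \<Rightarrow> real" where
  "PsiPost K \<pi> \<alpha> \<kappa> s t x zt zs =
     \<kappa> t * qpost K \<pi> \<alpha> s t zs zt x + (1 - \<kappa> t) * qmarg K \<pi> \<alpha> s x zs"

definition tgrid :: "nat \<Rightarrow> nat \<Rightarrow> real" where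
  "tgrid T i = real i / real T"

text \<open>PsiBack ... n z is the marginal Psi_{t(T-n)}(z | x), computed by the
  backward recursion starting from Psi_{t(T)} = Psi_1 = Cat(.; pi).\<close>
fun PsiBack :: "nat \<Rightarrow> (nat \<Rightarrow> real) \<Rightarrow> (real \<Rightarrow> real) \<Rightarrow> (real \<Rightarrow> real) \<Rightarrow> nat
    \<Rightarrow> (nat \<Rightarrow> real) \<Rightarrow> nat \<Rightarrow> (nat \<Rightarrow> real) \<Rightarrow> real" where
  "PsiBack K \<pi> \<alpha> \<kappa> T x 0 z = Cat K z \<pi>"
| "PsiBack K \<pi> \<alpha> \<kappa> T x (Suc n) z =
     (\<Sum>zt\<in>onehot K. PsiBack K \<pi> \<alpha> \<kappa> T x n zt *
        PsiPost K \<pi> \<alpha> \<kappa> (tgrid T (T - Suc n)) (tgrid T (T - n)) x zt z)"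

definition PsiMarg :: "nat \<Rightarrow> (nat \<Rightarrow> real) \<Rightarrow> (real \<Rightarrow> real) \<Rightarrow> (real \<Rightarrow> real) \<Rightarrow> nat
    \<Rightarrow> (nat \<Rightarrow> real) \<Rightarrow> nat \<Rightarrow> (nat \<Rightarrow> real) \<Rightarrow> real" where
  "PsiMarg K \<pi> \<alpha> \<kappa> T x i z = PsiBack K \<pi> \<alpha> \<kappa> T x (T - i) z"

end

theory Submission imports Defs begin

text \<open>Since q_t is the image of q_s under the forward transition (Chapman-Kolmogorov),
  Bayes' rule gives q_t(z_t) q_{s|t}(z_s | z_t) = q_{t|s}(z_t | z_s) q_s(z_s); summing over z_t,
  the true posterior maps q_t back to q_s. The trivial posterior q_s does so as well, hence
  so does every mixture Psi_{s|t}, whatever kappa_t is. Backward induction from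
  Psi_1 = Cat(.; pi) = q_1 (as alpha_1 = 0) along the grid then gives Psi_{t(i)} = q_{t(i)}. Where q_t(z_t) = 0, Chapman-Kolmogorov
  forces q_{t|s}(z_t | z_s) q_s(z_s) = 0 as well, so Bayes' rule survives the convention x / 0 = 0.\<close>

definition unit_vec :: "nat \<Rightarrow> nat \<Rightarrow> real" where
  "unit_vec j = (\<lambda>i. if i = j then 1 else 0)"

lemma inj_unit_vec: "inj unit_vec"
  by (rule injI) (metis unit_vec_def zero_neq_one)

lemma onehot_nonneg:
  assumes "v \<in> onehot K" shows "0 \<le> v i"
proof -
  have "v i \<in> {0, 1}" using assms unfolding onehot_def by blast
  then show ?thesis by auto
qed

lemma onehot_eq_unit_vecs: "onehot K = unit_vec ` {..<K}"
proof
  show "unit_vec ` {..<K} \<subseteq> onehot K"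
    by (auto simp: onehot_def unit_vec_def)
next
  show "onehot K \<subseteq> unit_vec ` {..<K}"
  proof
    fix v assume v: "v \<in> onehot K"
    have v01: "\<And>i. v i = 0 \<or> v i = 1" and vK: "\<And>i. i \<ge> K \<Longrightarrow> v i = 0"
      and v_sum: "(\<Sum>i<K. v i) = 1"
      using v unfolding onehot_def by auto
    obtain j where j: "j < K" "v j = 1"
      using v01 v_sum by (metis lessThan_iff sum.neutral zero_neq_one)
    have "v i = 0" if "i \<noteq> j" for i
    proof (rule ccontr)
      assume "v i \<noteq> 0"
      then have "v i = 1" "i < K" using v01 vK by (metis not_le)+
      moreover have "(\<Sum>k\<in>{i, j}. v k) \<le> (\<Sum>k<K. v k)"
        by (rule sum_mono2) (use j \<open>i < K\<close> v in \<open>auto simp: onehot_nonneg\<close>)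
      ultimately show False using v_sum j that by simp
    qed
    then have "v = unit_vec j" using j by (auto simp: unit_vec_def)
    then show "v \<in> unit_vec ` {..<K}" using j by blast
  qed
qed

lemma onehot_sum_eq_1: "v \<in> onehot K \<Longrightarrow> (\<Sum>i<K. v i) = 1"
  by (simp add: onehot_def)

lemma finite_onehot: "finite (onehot K)"
  by (simp add: onehot_eq_unit_vecs)

lemma sum_onehot: "(\<Sum>z\<in>onehot K. f z) = (\<Sum>j<K. f (unit_vec j))"
  unfolding onehot_eq_unit_vecs by (rule sum.reindex_cong[OF inj_on_subset[OF inj_unit_vec]]) auto

lemma unit_vec_commute: "unit_vec j i = unit_vec i j"
  by (simp add: unit_vec_def)

lemma Cat_unit_vec: "j < K \<Longrightarrow> Cat K (unit_vec j) p = p j"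
  unfolding Cat_def unit_vec_def by (simp add: if_distrib[of "\<lambda>c. c * _"] cong: if_cong)

lemma sum_Cat_onehot: "(\<Sum>z\<in>onehot K. Cat K z p) = (\<Sum>i<K. p i)"
  by (simp add: sum_onehot Cat_unit_vec)

lemma Cat_nonneg:
  assumes "z \<in> onehot K" and "\<forall>i<K. 0 \<le> p i"
  shows "0 \<le> Cat K z p"
  unfolding Cat_def using assms by (auto intro!: sum_nonneg simp: onehot_nonneg)

lemma sum_Cat_convex_comb:
  assumes "(\<Sum>i<K. u i) = 1" and "(\<Sum>i<K. w i) = 1"
  shows "(\<Sum>z\<in>onehot K. Cat K z (\<lambda>i. a * u i + (1 - a) * w i)) = 1"
  using assms by (simp add: sum_Cat_onehot sum.distrib flip: sum_distrib_left)

lemma Cat_convex_comb_nonneg: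
  assumes "z \<in> onehot K" and "0 \<le> a" "a \<le> 1" and "\<forall>i<K. 0 \<le> u i" "\<forall>i<K. 0 \<le> w i"
  shows "0 \<le> Cat K z (\<lambda>i. a * u i + (1 - a) * w i)"
  using assms by (intro Cat_nonneg) auto

lemma mult_divide_sum_cancel:
  fixes f :: "'a \<Rightarrow> real"
  assumes "finite S" and "\<forall>y\<in>S. 0 \<le> f y" and "x \<in> S"
  shows "sum f S * (f x / sum f S) = f x"
proof (cases "sum f S = 0")
  case True
  then have "f x = 0" using assms sum_nonneg_eq_0_iff by blast
  then show ?thesis by simp
qed simp

context
  fixes K :: nat and \<pi> :: "nat \<Rightarrow> real" and \<alpha> :: "real \<Rightarrow> real" and s t :: real
    and x :: "nat \<Rightarrow> real"
  assumes pi_nonneg: "\<forall>i<K. 0 \<le> \<pi> i" and pi_sum: "(\<Sum>i<K. \<pi> i) = 1"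
    and alpha_s: "0 < \<alpha> s" "\<alpha> s \<le> 1" and alpha_t: "0 \<le> \<alpha> t" "\<alpha> t \<le> \<alpha> s"
    and x_onehot: "x \<in> onehot K"
begin

lemma sum_qmarg: "0 \<le> \<alpha> r \<Longrightarrow> \<alpha> r \<le> 1 \<Longrightarrow> (\<Sum>z\<in>onehot K. qmarg K \<pi> \<alpha> r x z) = 1"
  unfolding qmarg_def by (rule sum_Cat_convex_comb[OF onehot_sum_eq_1[OF x_onehot] pi_sum])

lemma qmarg_nonneg: "0 \<le> \<alpha> r \<Longrightarrow> \<alpha> r \<le> 1 \<Longrightarrow> z \<in> onehot K \<Longrightarrow> 0 \<le> qmarg K \<pi> \<alpha> r x z"
  unfolding qmarg_def using x_onehot pi_nonneg
  by (intro Cat_convex_comb_nonneg) (auto simp: onehot_nonneg)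

lemma qtrans_nonneg:
  "zs \<in> onehot K \<Longrightarrow> zt \<in> onehot K \<Longrightarrow> 0 \<le> qtrans K \<pi> \<alpha> s t zs zt"
  unfolding qtrans_def using alpha_s alpha_t pi_nonneg
  by (intro Cat_convex_comb_nonneg) (auto simp: onehot_nonneg)

lemma sum_qtrans: "zs \<in> onehot K \<Longrightarrow> (\<Sum>zt\<in>onehot K. qtrans K \<pi> \<alpha> s t zs zt) = 1"
  unfolding qtrans_def by (rule sum_Cat_convex_comb) (simp_all add: onehot_sum_eq_1 pi_sum)

lemma chapman_kolmogorov:
  assumes "zt \<in> onehot K"
  shows "(\<Sum>zs\<in>onehot K. qtrans K \<pi> \<alpha> s t zs zt * qmarg K \<pi> \<alpha> s x zs) = qmarg K \<pi> \<alpha> t x zt"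
proof -
  obtain l where l: "l < K" "zt = unit_vec l"
    using assms onehot_eq_unit_vecs by blast
  define r where "r = \<alpha> t / \<alpha> s"
  define m where "m j = \<alpha> s * x j + (1 - \<alpha> s) * \<pi> j" for j
  have m_sum: "(\<Sum>j<K. m j) = 1"
    using sum_qmarg[OF less_imp_le[OF alpha_s(1)] alpha_s(2)]
    by (simp add: sum_onehot qmarg_def Cat_unit_vec m_def)
  have "(\<Sum>zs\<in>onehot K. qtrans K \<pi> \<alpha> s t zs zt * qmarg K \<pi> \<alpha> s x zs)
      = (\<Sum>j<K. (r * unit_vec j l + (1 - r) * \<pi> l) * m j)"
    by (simp add: sum_onehot qtrans_def qmarg_def Cat_unit_vec l r_def m_def)
  also have "\<dots> = r * Cat K (unit_vec l) m + (1 - r) * \<pi> l * (\<Sum>j<K. m j)"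
    by (simp add: Cat_def unit_vec_commute[of _ l] distrib_right sum.distrib
        sum_distrib_left mult.assoc)
  also have "\<dots> = r * m l + (1 - r) * \<pi> l"
    using l(1) by (simp add: Cat_unit_vec m_sum)
  also have "\<dots> = \<alpha> t * x l + (1 - \<alpha> t) * \<pi> l"
    using alpha_s(1) by (simp add: m_def r_def field_simps)
  also have "\<dots> = qmarg K \<pi> \<alpha> t x zt"
    by (simp add: qmarg_def Cat_unit_vec l)
  finally show ?thesis .
qed

lemma qmarg_mult_qpost:
  assumes "zs \<in> onehot K" and "zt \<in> onehot K"
  shows "qmarg K \<pi> \<alpha> t x zt * qpost K \<pi> \<alpha> s t zs zt x
    = qtrans K \<pi> \<alpha> s t zs zt * qmarg K \<pi> \<alpha> s x zs"
  unfolding qpost_def chapman_kolmogorov[OF assms(2), symmetric]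
  using assms alpha_s
  by (intro mult_divide_sum_cancel)
     (auto intro!: mult_nonneg_nonneg qtrans_nonneg qmarg_nonneg finite_onehot)

lemma sum_qmarg_PsiPost:
  assumes "zs \<in> onehot K"
  shows "(\<Sum>zt\<in>onehot K. qmarg K \<pi> \<alpha> t x zt * PsiPost K \<pi> \<alpha> \<kappa> s t x zt zs)
    = qmarg K \<pi> \<alpha> s x zs"
proof -
  let ?q = "qmarg K \<pi> \<alpha>"
  have summand: "?q t x zt * PsiPost K \<pi> \<alpha> \<kappa> s t x zt zs
      = \<kappa> t * ?q s x zs * qtrans K \<pi> \<alpha> s t zs zt + (1 - \<kappa> t) * ?q s x zs * ?q t x zt"
    if "zt \<in> onehot K" for zt
  proof -
    have "?q t x zt * PsiPost K \<pi> \<alpha> \<kappa> s t x zt zs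
        = \<kappa> t * (?q t x zt * qpost K \<pi> \<alpha> s t zs zt x) + (1 - \<kappa> t) * ?q s x zs * ?q t x zt"
      by (simp add: PsiPost_def algebra_simps)
    then show ?thesis
      by (simp add: qmarg_mult_qpost[OF assms that])
  qed
  have "(\<Sum>zt\<in>onehot K. ?q t x zt * PsiPost K \<pi> \<alpha> \<kappa> s t x zt zs)
      = (\<Sum>zt\<in>onehot K. \<kappa> t * ?q s x zs * qtrans K \<pi> \<alpha> s t zs zt
                        + (1 - \<kappa> t) * ?q s x zs * ?q t x zt)"
    by (rule sum.cong) (simp_all add: summand)
  also have "\<dots> = \<kappa> t * ?q s x zs * (\<Sum>zt\<in>onehot K. qtrans K \<pi> \<alpha> s t zs zt)
                 + (1 - \<kappa> t) * ?q s x zs * (\<Sum>zt\<in>onehot K. ?q t x zt)"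
    by (simp add: sum.distrib sum_distrib_left)
  also have "\<dots> = ?q s x zs"
    using assms alpha_s alpha_t by (simp add: sum_qtrans sum_qmarg algebra_simps)
  finally show ?thesis .
qed

end

lemma tgrid_bounds:
  assumes "T \<ge> 1" and "i \<le> T"
  shows "0 \<le> tgrid T i" "tgrid T i \<le> 1" "i < T \<Longrightarrow> tgrid T i < 1"
  using assms by (auto simp: tgrid_def divide_le_eq divide_less_eq)

lemma tgrid_mono: "i \<le> j \<Longrightarrow> tgrid T i \<le> tgrid T j"
  by (simp add: tgrid_def divide_right_mono)

lemma PsiBack_eq_qmarg:
  fixes \<alpha> :: "real \<Rightarrow> real"
  assumes pi_nonneg: "\<forall>i<K. 0 \<le> \<pi> i" and pi_sum: "(\<Sum>i<K. \<pi> i) = 1"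
    and alpha_range: "\<forall>t. 0 \<le> t \<and> t \<le> 1 \<longrightarrow> 0 \<le> \<alpha> t \<and> \<alpha> t \<le> 1"
    and alpha_mono: "\<forall>s t. 0 \<le> s \<and> s \<le> t \<and> t \<le> 1 \<longrightarrow> \<alpha> t \<le> \<alpha> s"
    and alpha_1: "\<alpha> 1 = 0"
    and alpha_pos: "\<forall>t. 0 \<le> t \<and> t < 1 \<longrightarrow> \<alpha> t > 0"
    and T1: "T \<ge> 1" and x_onehot: "x \<in> onehot K"
  shows "n \<le> T \<Longrightarrow> z \<in> onehot K
    \<Longrightarrow> PsiBack K \<pi> \<alpha> \<kappa> T x n z = qmarg K \<pi> \<alpha> (tgrid T (T - n)) x z"
proof (induction n arbitrary: z)
  case 0
  have "tgrid T T = 1" using T1 by (simp add: tgrid_def)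
  then show ?case by (simp add: qmarg_def alpha_1)
next
  case (Suc n)
  define s where "s = tgrid T (T - Suc n)"
  define t where "t = tgrid T (T - n)"
  have "0 \<le> s" "s < 1" "s \<le> t" "t \<le> 1"
    using tgrid_bounds[OF T1] tgrid_mono Suc.prems(1) by (auto simp: s_def t_def)
  then have "0 < \<alpha> s" "\<alpha> s \<le> 1" "0 \<le> \<alpha> t" "\<alpha> t \<le> \<alpha> s"
    using alpha_pos alpha_range alpha_mono by auto
  note step = sum_qmarg_PsiPost[where \<alpha> = \<alpha> and s = s and t = t,
      OF pi_nonneg pi_sum this x_onehot Suc.prems(2)]
  have "PsiBack K \<pi> \<alpha> \<kappa> T x (Suc n) z
      = (\<Sum>zt\<in>onehot K. qmarg K \<pi> \<alpha> t x zt * PsiPost K \<pi> \<alpha> \<kappa> s t x zt z)"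
    using Suc by (simp add: s_def t_def)
  also have "\<dots> = qmarg K \<pi> \<alpha> s x z"
    by (rule step)
  finally show ?case by (simp add: s_def)
qed

theorem mainTheorem1:
  fixes K T :: nat and \<pi> x :: "nat \<Rightarrow> real" and \<alpha> \<kappa> :: "real \<Rightarrow> real"
  assumes K2: "K \<ge> 2"
    and pi_nonneg: "\<forall>i<K. \<pi> i \<ge> 0"
    and pi_sum: "(\<Sum>i<K. \<pi> i) = 1"
    and alpha_range: "\<forall>t. 0 \<le> t \<and> t \<le> 1 \<longrightarrow> 0 \<le> \<alpha> t \<and> \<alpha> t \<le> 1"
    and alpha_mono: "\<forall>s t. 0 \<le> s \<and> s \<le> t \<and> t \<le> 1 \<longrightarrow> \<alpha> t \<le> \<alpha> s"
    and alpha_1: "\<alpha> 1 = 0"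
    and alpha_pos: "\<forall>t. 0 \<le> t \<and> t < 1 \<longrightarrow> \<alpha> t > 0"
    and T1: "T \<ge> 1"
    and kappa_range: "\<forall>i\<in>{1..T}. 0 \<le> \<kappa> (tgrid T i) \<and> \<kappa> (tgrid T i) \<le> 1"
    and x_onehot: "x \<in> onehot K"
  shows "\<forall>i\<le>T. \<forall>z\<in>onehot K.
           PsiMarg K \<pi> \<alpha> \<kappa> T x i z = qmarg K \<pi> \<alpha> (tgrid T i) x z"
  using PsiBack_eq_qmarg[OF pi_nonneg pi_sum alpha_range alpha_mono alpha_1 alpha_pos T1 x_onehot]
  by (simp add: PsiMarg_def)

end
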